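(* Let $(I,\preccurlyeq)$ be a directed set, let $S(\Lambda^{\preccurlyeq})$ and $S(M^{\preccurlyeq})$ be direct spectra over $(I,\preccurlyeq)$ with sets $\lambda_0(i)$, $\mu_0(i)$, transports $\lambda^{\preccurlyeq}_{ij}$, $\mu^{\preccurlyeq}_{ij}$ and Bishop spaces $\mathcal F_i=(\lambda_0(i),F_i)$, $\mathcal G_i=(\mu_0(i),G_i)$, and let $\Psi:S(\Lambda^{\preccurlyeq})\Rightarrow S(M^{\preccurlyeq})$ be a direct spectrum-map. Then: (i) for every $i\in I$, $e^{\Lambda^{\preccurlyeq}}_i\in\mathrm{Mor}(\mathcal F_i,\sum^{\preccurlyeq}_{i\in I}\mathcal F_i)$; (ii) if $\Psi$ is continuous, then $\Sigma^{\preccurlyeq}\Psi\in\mathrm{Mor}(\sum^{\preccurlyeq}_{i\in I}\mathcal F_i,\sum^{\preccurlyeq}_{i\in I}\mathcal G_i)$.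
   Context: Work in Bishop-style constructive mathematics. A directed set: a set with a reflexive transitive relation respecting equality, any two elements having a common upper bound. A direct family over $(I,\preccurlyeq)$: sets $\lambda_0(i)$ and functions $\lambda^{\preccurlyeq}_{ij}:\lambda_0(i)\to\lambda_0(j)$ for $i\preccurlyeq j$ with $\lambda^{\preccurlyeq}_{ii}=\mathrm{id}$ and $\lambda^{\preccurlyeq}_{ik}=\lambda^{\preccurlyeq}_{jk}\circ\lambda^{\preccurlyeq}_{ij}$. Bishop spaces: a Bishop topology on $X$ is a set $F$ of functions $X\to\mathbb R$ containing constants, closed under addition, composition with functions $\mathbb R\to\mathbb R$ uniformly continuous on every $[-n,n]$, and uniform limits; $\bigvee F_0$ = least Bishop topology containing $F_0$; Bishop morphism $(X,F)\to(Y,G)$: a function $h$ with $g\circ h\in F$ for all $g\in G$. A direct spectrum: a direct family with Bishop topologies $F_i$ on $\lambda_0(i)$ such that each $\lambda^{\preccurlyeq}_{ij}$ is a Bishop morphism $\mathcal F_i\to\mathcal F_j$. A direct spectrum-map $\Psi$: functions $\Psi_i:\lambda_0(i)\to\mu_0(i)$ with $\Psi_j\circ\lambda^{\preccurlyeq}_{ij}=\mu^{\preccurlyeq}_{ij}\circ\Psi_i$ for $i\preccurlyeq j$; continuous if each $\Psi_i\in\mathrm{Mor}(\mathcal F_i,\mathcal G_i)$. Sum space: $\sum^{\preccurlyeq}_{i\in I}\lambda_0(i)$ = pairs $(i,x)$, $x\in\lambda_0(i)$, with $(i,x)=(j,y)$ iff there is $k$ with $i,j\preccurlyeq k$ and $\lambda^{\preccurlyeq}_{ik}(x)=\lambda^{\preccurlyeq}_{jk}(y)$.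 $\prod^{\succcurlyeq}F_i$ = dependent assignments $\Theta$ with $\Theta_i\in F_i$ and $\Theta_i=\Theta_j\circ\lambda^{\preccurlyeq}_{ij}$ for $i\preccurlyeq j$; $f_\Theta(i,x):=\Theta_i(x)$ (a function on $\sum^{\preccurlyeq}$). The sum Bishop space is $\sum^{\preccurlyeq}_{i}\mathcal F_i=(\sum^{\preccurlyeq}\lambda_0(i),\bigvee\{f_\Theta:\Theta\in\prod^{\succcurlyeq}F_i\})$; similarly for $M$. $e^{\Lambda^{\preccurlyeq}}_i:\lambda_0(i)\to\sum^{\preccurlyeq}\lambda_0(i)$ is $x\mapsto(i,x)$, and $\Sigma^{\preccurlyeq}\Psi(i,x):=(i,\Psi_i(x))$. *)

theory Defs
  imports "HOL-Analysis.Analysis"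
begin

definition bounded_uc :: "(real \<Rightarrow> real) set" where
  "bounded_uc = {\<phi>. \<forall>n::nat. uniformly_continuous_on {- real n .. real n} \<phi>}"

text \<open>A Bishop topology on the carrier A: a set of real-valued functions (only their
  values on A matter) containing the constants, closed under addition, composition with
  functions in bounded_uc, and uniform limits on A.\<close>
definition is_bishop_topology :: "'a set \<Rightarrow> ('a \<Rightarrow> real) set \<Rightarrow> bool" where
  "is_bishop_topology A F \<longleftrightarrow>
     (\<forall>c. (\<lambda>_. c) \<in> F) \<and>
     (\<forall>f\<in>F. \<forall>g\<in>F. (\<lambda>x. f x + g x) \<in> F) \<and>
     (\<forall>f\<in>F. \<forall>\<phi>\<in>bounded_uc. \<phi> \<circ> f \<in> F) \<and>
     (\<forall>f g. (\<forall>n::nat. f n \<in> F) \<and>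
            (\<forall>\<epsilon>>0. \<exists>N. \<forall>n\<ge>N. \<forall>x\<in>A. \<bar>f n x - g x\<bar> \<le> \<epsilon>) \<longrightarrow> g \<in> F)"

definition bishop_gen :: "'a set \<Rightarrow> ('a \<Rightarrow> real) set \<Rightarrow> ('a \<Rightarrow> real) set" where
  "bishop_gen A F0 = \<Inter>{F. is_bishop_topology A F \<and> F0 \<subseteq> F}"

definition bishop_mor ::
  "'a set \<Rightarrow> ('a \<Rightarrow> real) set \<Rightarrow> 'b set \<Rightarrow> ('b \<Rightarrow> real) set \<Rightarrow> ('a \<Rightarrow> 'b) \<Rightarrow> bool" where
  "bishop_mor A F B G h \<longleftrightarrow> h ` A \<subseteq> B \<and> (\<forall>g\<in>G. g \<circ> h \<in> F)"

definition directed_set :: "'i set \<Rightarrow> ('i \<Rightarrow> 'i \<Rightarrow> bool) \<Rightarrow> bool" where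
  "directed_set I le \<longleftrightarrow>
     (\<forall>i\<in>I. le i i) \<and>
     (\<forall>i\<in>I. \<forall>j\<in>I. \<forall>k\<in>I. le i j \<and> le j k \<longrightarrow> le i k) \<and>
     (\<forall>i\<in>I. \<forall>j\<in>I. \<exists>k\<in>I. le i k \<and> le j k)"

definition direct_family ::
  "'i set \<Rightarrow> ('i \<Rightarrow> 'i \<Rightarrow> bool) \<Rightarrow> ('i \<Rightarrow> 'x set) \<Rightarrow> ('i \<Rightarrow> 'i \<Rightarrow> 'x \<Rightarrow> 'x) \<Rightarrow> bool" where
  "direct_family I le lam0 lam \<longleftrightarrow>
     (\<forall>i\<in>I. \<forall>j\<in>I. le i j \<longrightarrow> lam i j ` lam0 i \<subseteq> lam0 j) \<and>
     (\<forall>i\<in>I. \<forall>x\<in>lam0 i. lam i i x = x) \<and>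
     (\<forall>i\<in>I. \<forall>j\<in>I. \<forall>k\<in>I. le i j \<and> le j k \<longrightarrow>
        (\<forall>x\<in>lam0 i. lam i k x = lam j k (lam i j x)))"

definition direct_spectrum ::
  "'i set \<Rightarrow> ('i \<Rightarrow> 'i \<Rightarrow> bool) \<Rightarrow> ('i \<Rightarrow> 'x set) \<Rightarrow> ('i \<Rightarrow> 'i \<Rightarrow> 'x \<Rightarrow> 'x)
     \<Rightarrow> ('i \<Rightarrow> ('x \<Rightarrow> real) set) \<Rightarrow> bool" where
  "direct_spectrum I le lam0 lam F \<longleftrightarrow>
     direct_family I le lam0 lam \<and>
     (\<forall>i\<in>I. is_bishop_topology (lam0 i) (F i)) \<and>
     (\<forall>i\<in>I. \<forall>j\<in>I. le i j \<longrightarrow> bishop_mor (lam0 i) (F i) (lam0 j) (F j) (lam i j))"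

definition direct_spectrum_map ::
  "'i set \<Rightarrow> ('i \<Rightarrow> 'i \<Rightarrow> bool) \<Rightarrow> ('i \<Rightarrow> 'x set) \<Rightarrow> ('i \<Rightarrow> 'i \<Rightarrow> 'x \<Rightarrow> 'x)
     \<Rightarrow> ('i \<Rightarrow> 'y set) \<Rightarrow> ('i \<Rightarrow> 'i \<Rightarrow> 'y \<Rightarrow> 'y) \<Rightarrow> ('i \<Rightarrow> 'x \<Rightarrow> 'y) \<Rightarrow> bool" where
  "direct_spectrum_map I le lam0 lam mu0 mu Psi \<longleftrightarrow>
     (\<forall>i\<in>I. Psi i ` lam0 i \<subseteq> mu0 i) \<and>
     (\<forall>i\<in>I. \<forall>j\<in>I. le i j \<longrightarrow> (\<forall>x\<in>lam0 i. Psi j (lam i j x) = mu i j (Psi i x)))"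

definition continuous_spectrum_map ::
  "'i set \<Rightarrow> ('i \<Rightarrow> 'x set) \<Rightarrow> ('i \<Rightarrow> ('x \<Rightarrow> real) set)
     \<Rightarrow> ('i \<Rightarrow> 'y set) \<Rightarrow> ('i \<Rightarrow> ('y \<Rightarrow> real) set) \<Rightarrow> ('i \<Rightarrow> 'x \<Rightarrow> 'y) \<Rightarrow> bool" where
  "continuous_spectrum_map I lam0 F mu0 G Psi \<longleftrightarrow>
     (\<forall>i\<in>I. bishop_mor (lam0 i) (F i) (mu0 i) (G i) (Psi i))"

text \<open>Carrier: pairs (i,x) with x in lam0 i.  (The equality on the sum is the relation
  sum_eq below; all functions in the sum topology respect it.)\<close>
definition sum_carrier :: "'i set \<Rightarrow> ('i \<Rightarrow> 'x set) \<Rightarrow> ('i \<times> 'x) set" where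
  "sum_carrier I lam0 = Sigma I lam0"

definition sum_eq ::
  "'i set \<Rightarrow> ('i \<Rightarrow> 'i \<Rightarrow> bool) \<Rightarrow> ('i \<Rightarrow> 'i \<Rightarrow> 'x \<Rightarrow> 'x) \<Rightarrow> 'i \<times> 'x \<Rightarrow> 'i \<times> 'x \<Rightarrow> bool" where
  "sum_eq I le lam p q \<longleftrightarrow>
     (\<exists>k\<in>I. le (fst p) k \<and> le (fst q) k \<and> lam (fst p) k (snd p) = lam (fst q) k (snd q))"

definition prod_top ::
  "'i set \<Rightarrow> ('i \<Rightarrow> 'i \<Rightarrow> bool) \<Rightarrow> ('i \<Rightarrow> 'x set) \<Rightarrow> ('i \<Rightarrow> 'i \<Rightarrow> 'x \<Rightarrow> 'x)
     \<Rightarrow> ('i \<Rightarrow> ('x \<Rightarrow> real) set) \<Rightarrow> ('i \<Rightarrow> 'x \<Rightarrow> real) set" where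
  "prod_top I le lam0 lam F =
     {\<Theta>. (\<forall>i\<in>I. \<Theta> i \<in> F i) \<and>
          (\<forall>i\<in>I. \<forall>j\<in>I. le i j \<longrightarrow> (\<forall>x\<in>lam0 i. \<Theta> i x = \<Theta> j (lam i j x)))}"

definition f_Theta :: "('i \<Rightarrow> 'x \<Rightarrow> real) \<Rightarrow> 'i \<times> 'x \<Rightarrow> real" where
  "f_Theta \<Theta> p = \<Theta> (fst p) (snd p)"

definition sum_top ::
  "'i set \<Rightarrow> ('i \<Rightarrow> 'i \<Rightarrow> bool) \<Rightarrow> ('i \<Rightarrow> 'x set) \<Rightarrow> ('i \<Rightarrow> 'i \<Rightarrow> 'x \<Rightarrow> 'x)
     \<Rightarrow> ('i \<Rightarrow> ('x \<Rightarrow> real) set) \<Rightarrow> ('i \<times> 'x \<Rightarrow> real) set" where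
  "sum_top I le lam0 lam F =
     bishop_gen (sum_carrier I lam0) (f_Theta ` prod_top I le lam0 lam F)"

definition sum_inj :: "'i \<Rightarrow> 'x \<Rightarrow> 'i \<times> 'x" where
  "sum_inj i x = (i, x)"

definition sum_map :: "('i \<Rightarrow> 'x \<Rightarrow> 'y) \<Rightarrow> 'i \<times> 'x \<Rightarrow> 'i \<times> 'y" where
  "sum_map Psi p = (fst p, Psi (fst p) (snd p))"

end

theory Submission
  imports Defs
begin

text \<open>A map into a space whose topology is generated by a set G0 is a Bishop morphism as
  soon as its composites with the generators lie in the domain topology, because the
  functions whose composite with h lies in a Bishop topology again form a Bishop topology.
  For the injection e_i the generator f_Theta \<Theta> composes to \<Theta>_i \<in> F_i.  For the
  sum map, f_Theta \<Theta> \<circ> \<Sigma>\<Psi> = f_Theta (\<lambda>i. \<Theta>_i \<circ> \<Psi>_i), and \<Theta>_i \<circ> \<Psi>_i is again a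
  dependent assignment: it lies in F_i by continuity of \<Psi>_i and is compatible with the
  transports because \<Psi> commutes with them.\<close>

lemma is_bishop_topologyI:
  assumes "\<And>c. (\<lambda>_. c) \<in> F"
    and "\<And>f g. f \<in> F \<Longrightarrow> g \<in> F \<Longrightarrow> (\<lambda>x. f x + g x) \<in> F"
    and "\<And>f \<phi>. f \<in> F \<Longrightarrow> \<phi> \<in> bounded_uc \<Longrightarrow> \<phi> \<circ> f \<in> F"
    and "\<And>f g. (\<And>n::nat. f n \<in> F) \<Longrightarrow>
            (\<And>\<epsilon>. \<epsilon> > 0 \<Longrightarrow> \<exists>N. \<forall>n\<ge>N. \<forall>x\<in>A. \<bar>f n x - g x\<bar> \<le> \<epsilon>) \<Longrightarrow> g \<in> F"
  shows "is_bishop_topology A F"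
  unfolding is_bishop_topology_def using assms by blast

lemma is_bishop_topology_uniform_limit:
  assumes "is_bishop_topology A F" and "\<And>n::nat. f n \<in> F"
    and "\<And>\<epsilon>. \<epsilon> > 0 \<Longrightarrow> \<exists>N. \<forall>n\<ge>N. \<forall>x\<in>A. \<bar>f n x - g x\<bar> \<le> \<epsilon>"
  shows "g \<in> F"
  using assms unfolding is_bishop_topology_def by blast

lemma is_bishop_topology_Inter:
  assumes "\<And>F. F \<in> S \<Longrightarrow> is_bishop_topology A F"
  shows "is_bishop_topology A (\<Inter>S)"
  using assms unfolding is_bishop_topology_def by (simp add: Ball_def) blast

lemma is_bishop_topology_bishop_gen: "is_bishop_topology A (bishop_gen A F0)"
  unfolding bishop_gen_def by (rule is_bishop_topology_Inter) blast

lemma bishop_gen_upper: "F0 \<subseteq> bishop_gen A F0"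
  unfolding bishop_gen_def by blast

lemma bishop_gen_least:
  "is_bishop_topology A F \<Longrightarrow> F0 \<subseteq> F \<Longrightarrow> bishop_gen A F0 \<subseteq> F"
  unfolding bishop_gen_def by blast

lemma is_bishop_topology_pullback:
  assumes F: "is_bishop_topology A F" and h: "h ` A \<subseteq> B"
  shows "is_bishop_topology B {g. g \<circ> h \<in> F}"
proof (rule is_bishop_topologyI, simp_all only: mem_Collect_eq)
  show "(\<lambda>_. c) \<circ> h \<in> F" for c
    using F unfolding is_bishop_topology_def by (simp add: o_def)
  show "(\<lambda>x. f x + g x) \<circ> h \<in> F" if "f \<circ> h \<in> F" "g \<circ> h \<in> F" for f g
    using F that unfolding is_bishop_topology_def by (simp add: o_def)
  show "(\<phi> \<circ> f) \<circ> h \<in> F" if "f \<circ> h \<in> F" "\<phi> \<in> bounded_uc" for f \<phi>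
    using F that unfolding is_bishop_topology_def by (simp add: comp_assoc)
  show "g \<circ> h \<in> F"
    if fn: "\<And>n. f n \<circ> h \<in> F"
      and lim: "\<And>\<epsilon>. \<epsilon> > 0 \<Longrightarrow> \<exists>N. \<forall>n\<ge>N. \<forall>y\<in>B. \<bar>f n y - g y\<bar> \<le> \<epsilon>"
    for f :: "nat \<Rightarrow> _" and g
  proof (rule is_bishop_topology_uniform_limit[OF F, of "\<lambda>n. f n \<circ> h"])
    show "f n \<circ> h \<in> F" for n
      by (fact fn)
    show "\<exists>N. \<forall>n\<ge>N. \<forall>x\<in>A. \<bar>(f n \<circ> h) x - (g \<circ> h) x\<bar> \<le> \<epsilon>" if "\<epsilon> > 0" for \<epsilon>
      using lim[OF that] h by (auto simp: image_subset_iff)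
  qed
qed

lemma bishop_mor_bishop_genI:
  assumes "is_bishop_topology A F" and "h ` A \<subseteq> B"
    and "\<And>g. g \<in> G0 \<Longrightarrow> g \<circ> h \<in> F"
  shows "bishop_mor A F B (bishop_gen B G0) h"
proof -
  have "bishop_gen B G0 \<subseteq> {g. g \<circ> h \<in> F}"
    using assms by (intro bishop_gen_least is_bishop_topology_pullback) auto
  then show ?thesis using assms(2) unfolding bishop_mor_def by blast
qed

lemma f_Theta_comp_sum_inj: "f_Theta \<Theta> \<circ> sum_inj i = \<Theta> i"
  by (simp add: fun_eq_iff f_Theta_def sum_inj_def)

lemma f_Theta_comp_sum_map: "f_Theta \<Theta> \<circ> sum_map Psi = f_Theta (\<lambda>i. \<Theta> i \<circ> Psi i)"
  by (simp add: fun_eq_iff f_Theta_def sum_map_def)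

lemma bishop_mor_sum_inj:
  assumes "i \<in> I" and "is_bishop_topology (lam0 i) (F i)"
  shows "bishop_mor (lam0 i) (F i) (sum_carrier I lam0) (sum_top I le lam0 lam F) (sum_inj i)"
  unfolding sum_top_def
proof (rule bishop_mor_bishop_genI[OF assms(2)])
  show "sum_inj i ` lam0 i \<subseteq> sum_carrier I lam0"
    using assms(1) by (auto simp: sum_inj_def sum_carrier_def)
  show "g \<circ> sum_inj i \<in> F i" if "g \<in> f_Theta ` prod_top I le lam0 lam F" for g
    using that assms(1) by (auto simp: f_Theta_comp_sum_inj prod_top_def)
qed

lemma prod_top_comp_spectrum_map:
  assumes \<Psi>: "direct_spectrum_map I le lam0 lam mu0 mu Psi"
    and cont: "continuous_spectrum_map I lam0 F mu0 G Psi"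
    and \<Theta>: "\<Theta> \<in> prod_top I le mu0 mu G"
  shows "(\<lambda>i. \<Theta> i \<circ> Psi i) \<in> prod_top I le lam0 lam F"
  unfolding prod_top_def
proof (intro CollectI conjI ballI impI)
  show "\<Theta> i \<circ> Psi i \<in> F i" if "i \<in> I" for i
    using cont \<Theta> that
    unfolding continuous_spectrum_map_def bishop_mor_def prod_top_def by blast
  fix i j x assume ij: "i \<in> I" "j \<in> I" "le i j" and x: "x \<in> lam0 i"
  have "Psi i x \<in> mu0 i" and "Psi j (lam i j x) = mu i j (Psi i x)"
    using \<Psi> ij x unfolding direct_spectrum_map_def by blast+
  with \<Theta> ij show "(\<Theta> i \<circ> Psi i) x = (\<Theta> j \<circ> Psi j) (lam i j x)"
    unfolding prod_top_def by simp
qed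

lemma bishop_mor_sum_map:
  assumes "direct_spectrum_map I le lam0 lam mu0 mu Psi"
    and "continuous_spectrum_map I lam0 F mu0 G Psi"
  shows "bishop_mor (sum_carrier I lam0) (sum_top I le lam0 lam F)
           (sum_carrier I mu0) (sum_top I le mu0 mu G) (sum_map Psi)"
  unfolding sum_top_def
proof (rule bishop_mor_bishop_genI[OF is_bishop_topology_bishop_gen])
  show "sum_map Psi ` sum_carrier I lam0 \<subseteq> sum_carrier I mu0"
    using assms(1)
    by (auto simp: direct_spectrum_map_def sum_map_def sum_carrier_def image_subset_iff)
  fix g assume "g \<in> f_Theta ` prod_top I le mu0 mu G"
  then obtain \<Theta> where \<Theta>: "\<Theta> \<in> prod_top I le mu0 mu G" and g: "g = f_Theta \<Theta>" by blast
  have "f_Theta (\<lambda>i. \<Theta> i \<circ> Psi i) \<in> f_Theta ` prod_top I le lam0 lam F"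
    using prod_top_comp_spectrum_map[OF assms \<Theta>] by (rule imageI)
  then show "g \<circ> sum_map Psi \<in> bishop_gen (sum_carrier I lam0) (f_Theta ` prod_top I le lam0 lam F)"
    unfolding g f_Theta_comp_sum_map by (rule subsetD[OF bishop_gen_upper])
qed

theorem proposition7p7:
  fixes I :: "'i set" and le :: "'i \<Rightarrow> 'i \<Rightarrow> bool"
    and lam0 :: "'i \<Rightarrow> 'x set" and lam :: "'i \<Rightarrow> 'i \<Rightarrow> 'x \<Rightarrow> 'x"
    and F :: "'i \<Rightarrow> ('x \<Rightarrow> real) set"
    and mu0 :: "'i \<Rightarrow> 'y set" and mu :: "'i \<Rightarrow> 'i \<Rightarrow> 'y \<Rightarrow> 'y"
    and G :: "'i \<Rightarrow> ('y \<Rightarrow> real) set"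
    and Psi :: "'i \<Rightarrow> 'x \<Rightarrow> 'y"
  assumes "directed_set I le"
    and "direct_spectrum I le lam0 lam F"
    and "direct_spectrum I le mu0 mu G"
    and "direct_spectrum_map I le lam0 lam mu0 mu Psi"
  shows "(\<forall>i\<in>I. bishop_mor (lam0 i) (F i)
                  (sum_carrier I lam0) (sum_top I le lam0 lam F) (sum_inj i))
         \<and> (continuous_spectrum_map I lam0 F mu0 G Psi \<longrightarrow>
             bishop_mor (sum_carrier I lam0) (sum_top I le lam0 lam F)
                        (sum_carrier I mu0) (sum_top I le mu0 mu G) (sum_map Psi))"
proof (intro conjI ballI impI)
  show "bishop_mor (lam0 i) (F i) (sum_carrier I lam0) (sum_top I le lam0 lam F) (sum_inj i)"
    if "i \<in> I" for i
    using that assms(2) by (intro bishop_mor_sum_inj) (auto simp: direct_spectrum_def)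
  show "bishop_mor (sum_carrier I lam0) (sum_top I le lam0 lam F)
          (sum_carrier I mu0) (sum_top I le mu0 mu G) (sum_map Psi)"
    if "continuous_spectrum_map I lam0 F mu0 G Psi"
    using assms(4) that by (rule bishop_mor_sum_map)
qed

end
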